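(* Let $n\geq 1$. The monoid $M_n$ is left-cancellative and admits conditional right-lcms: any two elements of $M_n$ that admit a common right-multiple admit a right-lcm.
   Context: $M_n$ denotes the monoid with generators $\rho_1,\dots,\rho_n$ and relations $\rho_1\rho_n\rho_i=\rho_{i+1}\rho_n$ for $1\leq i\leq n-1$. $c$ is a right-multiple of $a$ if $c=ab$ for some $b$. A right-lcm of $a,b$ is a common right-multiple of $a$ and $b$ that left-divides every common right-multiple of $a$ and $b$. *)

theory Defs
  imports Main
begin

text \<open>Elements of the monoid M_n are represented by words (lists) over the generators
  rho_1, ..., rho_n, encoded as the natural numbers 1..n; two words represent the same
  element iff they are related by the congruence generated by the defining relations
  rho_1 rho_n rho_i = rho_(i+1) rho_n for 1 <= i <= n-1.\<close>

definition Mn_words :: "nat \<Rightarrow> nat list set" where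
  "Mn_words n = lists {1..n}"

definition Mn_rel :: "nat \<Rightarrow> nat list \<Rightarrow> nat list \<Rightarrow> bool" where
  "Mn_rel n u v \<longleftrightarrow> (\<exists>i. 1 \<le> i \<and> i \<le> n - 1 \<and> u = [1, n, i] \<and> v = [i + 1, n])"

inductive Mn_eq :: "nat \<Rightarrow> nat list \<Rightarrow> nat list \<Rightarrow> bool" for n where
  refl: "Mn_eq n w w"
| sym: "Mn_eq n u v \<Longrightarrow> Mn_eq n v u"
| trans: "Mn_eq n u v \<Longrightarrow> Mn_eq n v w \<Longrightarrow> Mn_eq n u w"
| step: "Mn_rel n u v \<Longrightarrow> Mn_eq n (x @ u @ y) (x @ v @ y)"

definition Mn_right_multiple :: "nat \<Rightarrow> nat list \<Rightarrow> nat list \<Rightarrow> bool" where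
  "Mn_right_multiple n c a \<longleftrightarrow> (\<exists>b\<in>Mn_words n. Mn_eq n c (a @ b))"

definition Mn_common_right_multiple :: "nat \<Rightarrow> nat list \<Rightarrow> nat list \<Rightarrow> nat list \<Rightarrow> bool" where
  "Mn_common_right_multiple n c a b \<longleftrightarrow> Mn_right_multiple n c a \<and> Mn_right_multiple n c b"

definition Mn_right_lcm :: "nat \<Rightarrow> nat list \<Rightarrow> nat list \<Rightarrow> nat list \<Rightarrow> bool" where
  "Mn_right_lcm n c a b \<longleftrightarrow> c \<in> Mn_words n \<and> Mn_common_right_multiple n c a b \<and>
     (\<forall>d\<in>Mn_words n. Mn_common_right_multiple n d a b \<longrightarrow> Mn_right_multiple n d c)"

definition Mn_left_cancellative :: "nat \<Rightarrow> bool" where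
  "Mn_left_cancellative n \<longleftrightarrow>
     (\<forall>a\<in>Mn_words n. \<forall>b\<in>Mn_words n. \<forall>c\<in>Mn_words n.
        Mn_eq n (a @ b) (a @ c) \<longrightarrow> Mn_eq n b c)"

definition Mn_conditional_right_lcms :: "nat \<Rightarrow> bool" where
  "Mn_conditional_right_lcms n \<longleftrightarrow>
     (\<forall>a\<in>Mn_words n. \<forall>b\<in>Mn_words n.
        (\<exists>c\<in>Mn_words n. Mn_common_right_multiple n c a b) \<longrightarrow>
        (\<exists>c. Mn_right_lcm n c a b))"

end

theory Submission
  imports Defs
begin

text \<open>The defining relations hold for \<open>\<rho>\<^sub>i \<mapsto> x\<^sup>i y\<^sup>-\<^sup>i\<close> (\<open>i < n\<close>),
  \<open>\<rho>\<^sub>n \<mapsto> y\<close> in the free product \<open>\<langle>x\<rangle> * \<langle>y\<rangle>\<close> of cyclic groups of orders \<open>n\<close> and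
  \<open>n + 1\<close>, and they preserve the weight \<open>\<Sum> i\<close> of a word. Every word is equivalent to a fixed
  normal word of its image followed by a power of the central element \<open>\<Delta> = \<rho>\<^sub>n\<^sup>n\<^sup>+\<^sup>1\<close>,
  so image and weight together determine an element of \<open>M\<^sub>n\<close>; as the image lies in a group,
  \<open>M\<^sub>n\<close> is left-cancellative. For generators \<open>s < t\<close>, comparing the normal forms shows
  that every common right-multiple of \<open>\<rho>\<^sub>s\<close> and \<open>\<rho>\<^sub>t\<close> is a right-multiple of
  \<open>\<rho>\<^sub>t \<rho>\<^sub>n\<^sup>s = \<rho>\<^sub>s \<rho>\<^sub>n\<^sup>s \<rho>\<^sub>t\<^sub>-\<^sub>s\<close>. Right-lcms of arbitrary elements are then
  assembled from these by left cancellation, by induction on the weight of a common multiple.\<close>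

lemma Mn_eq_context: "Mn_eq n u v \<Longrightarrow> Mn_eq n (x @ u @ y) (x @ v @ y)"
proof (induction rule: Mn_eq.induct)
  case (step u v x' y')
  then have "Mn_eq n ((x @ x') @ u @ (y' @ y)) ((x @ x') @ v @ (y' @ y))"
    by (rule Mn_eq.step)
  then show ?case by simp
qed (auto intro: Mn_eq.refl Mn_eq.sym elim: Mn_eq.trans)

lemma Mn_eq_append_left: "Mn_eq n u v \<Longrightarrow> Mn_eq n (x @ u) (x @ v)"
  using Mn_eq_context[of n u v x "[]"] by simp

lemma Mn_eq_append_right: "Mn_eq n u v \<Longrightarrow> Mn_eq n (u @ y) (v @ y)"
  using Mn_eq_context[of n u v "[]" y] by simp

lemma Mn_eq_Cons: "Mn_eq n u v \<Longrightarrow> Mn_eq n (s # u) (s # v)"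
  using Mn_eq_append_left[of n u v "[s]"] by simp

lemma Mn_eq_sum_list: "Mn_eq n u v \<Longrightarrow> sum_list u = sum_list v"
  by (induction rule: Mn_eq.induct) (auto simp: Mn_rel_def)

lemma Mn_eq_relation: "1 \<le> i \<Longrightarrow> i \<le> n - 1 \<Longrightarrow> Mn_eq n [1, n, i] [i + 1, n]"
  using Mn_eq.step[of n "[1, n, i]" "[i + 1, n]" "[]" "[]"] by (auto simp: Mn_rel_def)

declare Mn_eq.trans [trans]

section \<open>Powers of \<open>\<rho>\<^sub>n\<close> and of \<open>\<rho>\<^sub>1 \<rho>\<^sub>n\<close>\<close>

definition rhon_pow :: "nat \<Rightarrow> nat \<Rightarrow> nat list" where
  "rhon_pow n k = replicate k n"

definition sigma_pow :: "nat \<Rightarrow> nat \<Rightarrow> nat list" where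
  "sigma_pow n j = concat (replicate j [1, n])"

lemma rhon_pow_0 [simp]: "rhon_pow n 0 = []"
  by (simp add: rhon_pow_def)

lemma rhon_pow_Suc: "rhon_pow n (Suc k) = n # rhon_pow n k"
  by (simp add: rhon_pow_def)

lemma rhon_pow_Suc': "rhon_pow n (Suc k) = rhon_pow n k @ [n]"
  by (simp add: rhon_pow_def replicate_append_same)

lemma rhon_pow_add: "rhon_pow n (a + b) = rhon_pow n a @ rhon_pow n b"
  by (simp add: rhon_pow_def replicate_add)

lemma sum_list_rhon_pow: "sum_list (rhon_pow n k) = n * k"
  by (simp add: rhon_pow_def sum_list_replicate)

lemma set_rhon_pow: "1 \<le> n \<Longrightarrow> set (rhon_pow n k) \<subseteq> {1..n}"
  by (auto simp: rhon_pow_def)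

lemma sigma_pow_0 [simp]: "sigma_pow n 0 = []"
  by (simp add: sigma_pow_def)

lemma sigma_pow_add: "sigma_pow n (a + b) = sigma_pow n a @ sigma_pow n b"
  by (simp add: sigma_pow_def replicate_add)

lemma sigma_pow_Suc: "sigma_pow n (Suc j) = [1, n] @ sigma_pow n j"
  by (simp add: sigma_pow_def)

lemma sigma_pow_Suc': "sigma_pow n (Suc j) = sigma_pow n j @ [1, n]"
  using sigma_pow_add[of n j 1] by (simp add: sigma_pow_def)

lemma sigma_pow_shift:
  "1 \<le> a \<Longrightarrow> a + j \<le> n \<Longrightarrow> Mn_eq n (sigma_pow n j @ a # w) ((a + j) # rhon_pow n j @ w)"
proof (induction j arbitrary: a w)
  case 0
  then show ?case by (simp add: Mn_eq.refl)
next
  case (Suc j)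
  have "Mn_eq n (sigma_pow n j @ [1, n, a] @ w) (sigma_pow n j @ [a + 1, n] @ w)"
    by (rule Mn_eq_append_left, rule Mn_eq_append_right, rule Mn_eq_relation) (use Suc.prems in auto)
  also have "Mn_eq n \<dots> ((a + 1 + j) # rhon_pow n j @ n # w)"
    using Suc.IH[of "a + 1" "n # w"] Suc.prems by simp
  finally show ?case
    by (simp add: sigma_pow_Suc' rhon_pow_Suc')
qed

lemma letter_rhon_pow_eq_sigma_pow:
  "1 \<le> a \<Longrightarrow> a \<le> n \<Longrightarrow> Mn_eq n (a # rhon_pow n a @ w) (sigma_pow n a @ w)"
proof (induction a arbitrary: w)
  case (Suc a)
  show ?case
  proof (cases "a = 0")
    case True
    then show ?thesis by (simp add: rhon_pow_def sigma_pow_def Mn_eq.refl)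
  next
    case False
    have "Mn_eq n ([a + 1, n] @ rhon_pow n a @ w) ([1, n, a] @ rhon_pow n a @ w)"
      by (rule Mn_eq_append_right, rule Mn_eq.sym, rule Mn_eq_relation) (use Suc.prems False in auto)
    also have "Mn_eq n \<dots> ([1, n] @ sigma_pow n a @ w)"
      using Mn_eq_append_left[OF Suc.IH[of w], of "[1, n]"] Suc.prems False by simp
    finally show ?thesis
      by (simp add: sigma_pow_Suc rhon_pow_Suc)
  qed
qed simp

lemma Delta_commute_letter:
  assumes "1 \<le> c" "c \<le> n"
  shows "Mn_eq n (rhon_pow n (n + 1) @ [c]) (c # rhon_pow n (n + 1))"
proof -
  have "Mn_eq n (rhon_pow n (n + 1) @ [c]) (sigma_pow n c @ sigma_pow n (n - c) @ [c])"
    using letter_rhon_pow_eq_sigma_pow[of n n "[c]"] assms sigma_pow_add[of n c "n - c"]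
    by (simp add: rhon_pow_Suc)
  also have "Mn_eq n \<dots> (sigma_pow n c @ n # rhon_pow n (n - c))"
    using Mn_eq_append_left[OF sigma_pow_shift[of c "n - c" n "[]"]] assms by simp
  also have "Mn_eq n \<dots> (c # rhon_pow n c @ n # rhon_pow n (n - c))"
    using Mn_eq.sym[OF letter_rhon_pow_eq_sigma_pow[of c n]] assms by simp
  also have "c # rhon_pow n c @ n # rhon_pow n (n - c) = c # rhon_pow n (n + 1)"
    using assms rhon_pow_add[of n c "Suc (n - c)"] by (simp add: rhon_pow_Suc)
  finally show ?thesis .
qed

lemma Delta_commute: "set w \<subseteq> {1..n} \<Longrightarrow> Mn_eq n (rhon_pow n (n + 1) @ w) (w @ rhon_pow n (n + 1))"
proof (induction w)
  case (Cons c w)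
  have "Mn_eq n ((rhon_pow n (n + 1) @ [c]) @ w) ((c # rhon_pow n (n + 1)) @ w)"
    using Cons.prems by (intro Mn_eq_append_right Delta_commute_letter) auto
  also have "Mn_eq n \<dots> (c # w @ rhon_pow n (n + 1))"
    using Cons by (auto intro: Mn_eq_Cons)
  finally show ?case by simp
qed (simp add: Mn_eq.refl)

section \<open>A free product of cyclic groups\<close>

text \<open>A pair \<open>(False, a)\<close> stands for \<open>x\<^sup>a\<close> and \<open>(True, b)\<close> for \<open>y\<^sup>b\<close>, where \<open>x\<close> has order
  \<open>n\<close> and \<open>y\<close> has order \<open>n + 1\<close>; reduced lists are the normal forms of the free product
  \<open>\<langle>x\<rangle> * \<langle>y\<rangle>\<close>.\<close>

definition factor_order :: "nat \<Rightarrow> bool \<Rightarrow> nat" where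
  "factor_order n k = (if k then Suc n else n)"

definition head_differs :: "bool \<Rightarrow> (bool \<times> nat) list \<Rightarrow> bool" where
  "head_differs k r = (case r of [] \<Rightarrow> True | (k', _) # _ \<Rightarrow> k' \<noteq> k)"

fun reduced :: "nat \<Rightarrow> (bool \<times> nat) list \<Rightarrow> bool" where
  "reduced n [] = True"
| "reduced n ((k, a) # r) = (0 < a \<and> a < factor_order n k \<and> head_differs k r \<and> reduced n r)"

lemma head_differs_simps [simp]:
  "head_differs k []" "head_differs k ((k', b) # r) = (k' \<noteq> k)"
  by (auto simp: head_differs_def)

lemma factor_order_pos: "1 \<le> n \<Longrightarrow> 0 < factor_order n k"
  by (simp add: factor_order_def)

fun lmult :: "nat \<Rightarrow> bool \<Rightarrow> nat \<Rightarrow> (bool \<times> nat) list \<Rightarrow> (bool \<times> nat) list" where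
  "lmult n k a [] = (if a mod factor_order n k = 0 then [] else [(k, a mod factor_order n k)])"
| "lmult n k a ((k', b) # r) =
    (if k' = k then
       (if (a + b) mod factor_order n k = 0 then r else (k, (a + b) mod factor_order n k) # r)
     else if a mod factor_order n k = 0 then (k', b) # r
     else (k, a mod factor_order n k) # (k', b) # r)"

lemma lmult_head_differs:
  "head_differs k r \<Longrightarrow>
    lmult n k a r = (if a mod factor_order n k = 0 then r else (k, a mod factor_order n k) # r)"
  by (cases r) auto

lemma reduced_lmult: "1 \<le> n \<Longrightarrow> reduced n h \<Longrightarrow> reduced n (lmult n k a h)"
  using factor_order_pos[of n k]
  by (cases "(n, k, a, h)" rule: lmult.cases) (auto simp: head_differs_def)

lemma lmult_lmult: "1 \<le> n \<Longrightarrow> reduced n h \<Longrightarrow> lmult n k a (lmult n k b h) = lmult n k (a + b) h"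
proof (cases h)
  case (Cons p r)
  assume "reduced n h"
  obtain k' c where p: "p = (k', c)" by (cases p)
  show ?thesis
  proof (cases "k' = k")
    case True
    then have "head_differs k r" using \<open>reduced n h\<close> Cons p by simp
    then show ?thesis using True Cons p lmult_head_differs[of k r n]
      by (auto simp: mod_simps add.assoc)
  qed (use Cons p in \<open>auto simp: mod_simps add.assoc\<close>)
qed (auto simp: mod_simps add.commute)

lemma lmult_period:
  assumes "reduced n h" and "a mod factor_order n k = 0"
  shows "lmult n k a h = h"
proof (cases h)
  case (Cons p r)
  obtain k' c where p: "p = (k', c)" by (cases p)
  show ?thesis using assms Cons p
    by (cases k; cases k') (auto simp: mod_simps dvd_add_right_iff dest: dvd_imp_le)
qed (use assms in simp)

lemma lmult_inj:
  assumes n: "1 \<le> n" and h: "reduced n h1" "reduced n h2" and e: "lmult n k a h1 = lmult n k a h2"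
  shows "h1 = h2"
proof -
  define b where "b = factor_order n k - a mod factor_order n k"
  have "(b + a) mod factor_order n k = (b + a mod factor_order n k) mod factor_order n k"
    by (simp add: mod_simps)
  also have "b + a mod factor_order n k = factor_order n k"
    using factor_order_pos[OF n, of k] by (simp add: b_def)
  finally have "\<And>h. reduced n h \<Longrightarrow> lmult n k b (lmult n k a h) = h"
    using lmult_lmult[OF n] lmult_period by simp
  then show ?thesis using e h by metis
qed

text \<open>\<open>\<rho>\<^sub>s\<close> acts as \<open>x\<^sup>s y\<^sup>-\<^sup>s\<close> for \<open>s < n\<close> and \<open>\<rho>\<^sub>n\<close> as \<open>y\<close>.\<close>

definition gen_action :: "nat \<Rightarrow> nat \<Rightarrow> (bool \<times> nat) list \<Rightarrow> (bool \<times> nat) list" where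
  "gen_action n s h =
    (if s < n then lmult n False s (lmult n True (Suc n - s) h) else lmult n True 1 h)"

definition group_image :: "nat \<Rightarrow> nat list \<Rightarrow> (bool \<times> nat) list" where
  "group_image n u = foldr (gen_action n) u []"

lemma reduced_gen_action: "1 \<le> n \<Longrightarrow> reduced n h \<Longrightarrow> reduced n (gen_action n s h)"
  by (simp add: gen_action_def reduced_lmult)

lemma reduced_foldr_gen_action: "1 \<le> n \<Longrightarrow> reduced n h \<Longrightarrow> reduced n (foldr (gen_action n) x h)"
  by (induction x) (auto simp: reduced_gen_action)

lemma reduced_group_image: "1 \<le> n \<Longrightarrow> reduced n (group_image n u)"
  by (simp add: group_image_def reduced_foldr_gen_action)

lemma group_image_Cons: "group_image n (s # u) = gen_action n s (group_image n u)"
  by (simp add: group_image_def)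

lemma group_image_append: "group_image n (x @ y) = foldr (gen_action n) x (group_image n y)"
  by (simp add: group_image_def)

lemma gen_action_relation:
  assumes i: "1 \<le> i" "i \<le> n - 1" and h: "reduced n h"
  shows "gen_action n 1 (gen_action n n (gen_action n i h)) = gen_action n (i + 1) (gen_action n n h)"
proof -
  have n: "1 \<le> n" "i < n" "1 < n" using i by auto
  define h' where "h' = lmult n True (Suc n - i) h"
  have h': "reduced n h'" "reduced n (lmult n False i h')"
    using reduced_lmult[OF n(1)] h by (simp_all add: h'_def)
  have "gen_action n 1 (gen_action n n (gen_action n i h))
      = lmult n False 1 (lmult n True n (lmult n True 1 (lmult n False i h')))"
    using n by (simp add: gen_action_def h'_def)
  also have "\<dots> = lmult n False 1 (lmult n False i h')"
    using lmult_lmult[OF n(1) h'(2), of True n 1] lmult_period[OF h'(2), of "n + 1" True]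
    by (simp add: factor_order_def)
  also have "\<dots> = lmult n False (i + 1) h'"
    using lmult_lmult[OF n(1) h'(1), of False 1 i] by simp
  also have "\<dots> = gen_action n (i + 1) (gen_action n n h)"
  proof (cases "i + 1 < n")
    case True
    then show ?thesis
      using lmult_lmult[OF n(1) h, of True "Suc n - (i + 1)" 1]
      by (simp add: gen_action_def h'_def Suc_diff_Suc Suc_diff_le)
  next
    case False
    then have "i + 1 = n" "Suc n - i = 2" using i by auto
    then show ?thesis
      using lmult_lmult[OF n(1) h, of True 1 1] lmult_period[OF h'(1), of "i + 1" False]
      by (simp add: gen_action_def h'_def factor_order_def numeral_2_eq_2)
  qed
  finally show ?thesis .
qed

lemma group_image_Mn_eq: "Mn_eq n u v \<Longrightarrow> group_image n u = group_image n v"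
proof (induction rule: Mn_eq.induct)
  case (step u v x y)
  then obtain i where i: "1 \<le> i" "i \<le> n - 1" "u = [1, n, i]" "v = [i + 1, n]"
    by (auto simp: Mn_rel_def)
  then have "reduced n (group_image n y)" by (intro reduced_group_image) simp
  then have "foldr (gen_action n) u (group_image n y) = foldr (gen_action n) v (group_image n y)"
    using i gen_action_relation[OF i(1,2)] by simp
  then show ?case by (simp only: group_image_append)
qed auto

lemma gen_action_inj:
  assumes n: "1 \<le> n" and h: "reduced n h1" "reduced n h2"
    and e: "gen_action n s h1 = gen_action n s h2"
  shows "h1 = h2"
proof (cases "s < n")
  case True
  then have "lmult n True (Suc n - s) h1 = lmult n True (Suc n - s) h2"
    using e lmult_inj[OF n reduced_lmult[OF n h(1)] reduced_lmult[OF n h(2)]]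
    by (simp add: gen_action_def)
  then show ?thesis by (rule lmult_inj[OF n h])
next
  case False
  then show ?thesis using e lmult_inj[OF n h] by (simp add: gen_action_def)
qed

lemma foldr_gen_action_inj:
  "1 \<le> n \<Longrightarrow> reduced n h1 \<Longrightarrow> reduced n h2 \<Longrightarrow>
    foldr (gen_action n) x h1 = foldr (gen_action n) x h2 \<Longrightarrow> h1 = h2"
proof (induction x)
  case (Cons s x)
  then show ?case
    using gen_action_inj[OF Cons.prems(1) reduced_foldr_gen_action[OF Cons.prems(1,2)]
        reduced_foldr_gen_action[OF Cons.prems(1,3)]]
    by simp
qed simp

section \<open>Normal forms and left cancellativity\<close>

text \<open>The word \<open>\<rho>\<^sub>a \<rho>\<^sub>n\<^sup>k\<close> maps to \<open>x\<^sup>a y\<^sup>k\<^sup>-\<^sup>a\<close>. The last equation only concerns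
  non-reduced lists.\<close>

fun normal_word :: "nat \<Rightarrow> (bool \<times> nat) list \<Rightarrow> nat list" where
  "normal_word n [] = []"
| "normal_word n ((True, b) # r) = rhon_pow n b @ normal_word n r"
| "normal_word n [(False, a)] = a # rhon_pow n a"
| "normal_word n ((False, a) # (True, b) # r) = a # rhon_pow n ((a + b) mod Suc n) @ normal_word n r"
| "normal_word n ((False, a) # (False, b) # r) = []"

text \<open>The power of \<open>\<Delta>\<close> split off when \<open>\<rho>\<^sub>s\<close> is multiplied onto \<open>normal_word n h\<close>
  (see \<open>normal_word_gen_action\<close>); \<open>(s + a) div n\<close> is the carry in \<open>x\<^sup>s x\<^sup>a\<close>.\<close>

fun Delta_carry :: "nat \<Rightarrow> nat \<Rightarrow> (bool \<times> nat) list \<Rightarrow> nat" where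
  "Delta_carry n s ((True, b) # (False, a) # r) =
    (if s = n then (if b = n then 1 else 0)
     else if b \<noteq> s then 0
     else case r of
       [] \<Rightarrow> (s + a) div n
     | (_, c) # _ \<Rightarrow> (if n < s + (s + a) div n + (a + c) mod Suc n then 1 else 0))"
| "Delta_carry n s ((True, b) # r) = (if s = n \<and> b = n then 1 else 0)"
| "Delta_carry n s _ = 0"

lemma Delta_carry_rhon: "Delta_carry n n h = (if \<exists>r. h = (True, n) # r then 1 else 0)"
  by (induction n n h rule: Delta_carry.induct) auto

lemma Delta_carry_other_head:
  "s \<noteq> n \<Longrightarrow> \<not> (\<exists>r. h = (True, s) # r) \<Longrightarrow> Delta_carry n s h = 0"
  by (induction n s h rule: Delta_carry.induct) auto

lemma set_normal_word: "1 \<le> n \<Longrightarrow> reduced n h \<Longrightarrow> set (normal_word n h) \<subseteq> {1..n}"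
  by (induction n h rule: normal_word.induct) (auto simp: rhon_pow_def factor_order_def)

lemma rhon_pow_reduce:
  assumes w: "set w \<subseteq> {1..n}" and x: "x < 2 * (n + 1)"
  shows "Mn_eq n (p @ rhon_pow n x @ w)
    (p @ rhon_pow n (x mod Suc n) @ w @ rhon_pow n ((n + 1) * (if n < x then 1 else 0)))"
proof (cases "n < x")
  case True
  then have "x = x mod Suc n + (n + 1)"
    using x le_mod_geq[of "Suc n" x] by simp
  then have "rhon_pow n x = rhon_pow n (x mod Suc n) @ rhon_pow n (n + 1)"
    by (metis rhon_pow_add)
  then show ?thesis
    using True Mn_eq_append_left[OF Delta_commute[OF w], of "p @ rhon_pow n (x mod Suc n)"] by simp
qed (simp add: Mn_eq.refl)

lemma sigma_pow_letter:
  assumes s: "1 \<le> s" "s < n" and a: "0 < a" "a < n"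
  shows "Mn_eq n (sigma_pow n s @ a # w)
    ((if (s + a) mod n = 0 then [] else [(s + a) mod n]) @ rhon_pow n (s + (s + a) div n) @ w)"
proof (cases "s + a < n")
  case True
  then show ?thesis using sigma_pow_shift[of a s n w] s a by (simp add: add.commute)
next
  case False
  define x where "x = s + a - n"
  have x: "x < n" "s = x + (n - a)" "(s + a) div n = 1" "(s + a) mod n = x"
    using False s a le_mod_geq[of n "s + a"] by (auto simp: x_def le_div_geq)
  have "Mn_eq n (sigma_pow n s @ a # w) (sigma_pow n x @ n # rhon_pow n (n - a) @ w)"
    using Mn_eq_append_left[OF sigma_pow_shift[of a "n - a" n w], of "sigma_pow n x"] a
      sigma_pow_add[of n x "n - a"] x(2)
    by simp
  also have "rhon_pow n (s + 1) = rhon_pow n x @ n # rhon_pow n (n - a)"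
    using x(2) rhon_pow_add[of n x "Suc (n - a)"] by (simp add: rhon_pow_Suc)
  then have "Mn_eq n (sigma_pow n x @ n # rhon_pow n (n - a) @ w)
      ((if x = 0 then [] else [x]) @ rhon_pow n (s + 1) @ w)"
    using Mn_eq.sym[OF letter_rhon_pow_eq_sigma_pow[of x n "n # rhon_pow n (n - a) @ w"]] x(1)
    by (cases "x = 0") (simp_all add: Mn_eq.refl)
  finally show ?thesis using x(3,4) by (cases "x = 0") simp_all
qed

lemma normal_word_gen_action_rhon:
  assumes n: "1 \<le> n" and h: "reduced n h"
  shows "Mn_eq n (n # normal_word n h)
    (normal_word n (gen_action n n h) @ rhon_pow n ((n + 1) * Delta_carry n n h))"
proof (cases "\<exists>r. h = (True, n) # r")
  case True
  then obtain r where r: "h = (True, n) # r" by blast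
  have "set (normal_word n r) \<subseteq> {1..n}" using set_normal_word[OF n] h r by simp
  then show ?thesis
    using r Delta_commute[of "normal_word n r" n]
    by (simp add: gen_action_def factor_order_def Delta_carry_rhon rhon_pow_Suc)
next
  case False
  then have "gen_action n n h = lmult n True 1 h" "Delta_carry n n h = 0"
    by (simp_all add: gen_action_def Delta_carry_rhon)
  moreover have "normal_word n (lmult n True 1 h) = n # normal_word n h"
  proof (cases h)
    case (Cons p r)
    then show ?thesis using False h n
      by (cases p; cases "fst p") (auto simp: factor_order_def rhon_pow_Suc)
  qed (use n in \<open>simp add: factor_order_def rhon_pow_def\<close>)
  ultimately show ?thesis by (simp add: Mn_eq.refl)
qed

lemma normal_word_gen_action_no_head:
  assumes s: "1 \<le> s" "s < n" and h: "h = [] \<or> (\<exists>a r. h = (False, a) # r)"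
  shows "Mn_eq n (s # normal_word n h)
    (normal_word n (gen_action n s h) @ rhon_pow n ((n + 1) * Delta_carry n s h))"
proof -
  have "gen_action n s h = (False, s) # (True, Suc n - s) # h"
    using h s by (auto simp: gen_action_def factor_order_def)
  moreover have "(s + (Suc n - s)) mod Suc n = 0" using s by simp
  ultimately show ?thesis using h s by (auto simp: Mn_eq.refl)
qed

lemma normal_word_gen_action_other_head:
  assumes s: "1 \<le> s" "s < n" and h: "reduced n h" "h = (True, b) # r" and b: "b \<noteq> s"
  shows "Mn_eq n (s # normal_word n h)
    (normal_word n (gen_action n s h) @ rhon_pow n ((n + 1) * Delta_carry n s h))"
proof -
  have b1: "0 < b" "b < Suc n" using h by (auto simp: factor_order_def)
  define b' where "b' = (Suc n - s + b) mod Suc n"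
  have "b' = (if b < s then Suc n - s + b else b - s)"
    using s b1 le_mod_geq[of "Suc n" "Suc n - s + b"] by (auto simp: b'_def)
  then have "b' \<noteq> 0" using s b by auto
  then have "gen_action n s h = (False, s) # (True, b') # r"
    using h s by (simp add: gen_action_def factor_order_def b'_def)
  moreover have "(s + b') mod Suc n = b"
  proof -
    have "(s + b') mod Suc n = (s + (Suc n - s + b)) mod Suc n"
      by (simp add: b'_def mod_simps)
    also have "s + (Suc n - s + b) = b + Suc n" using s by simp
    finally show ?thesis using b1 mod_add_self2[of b "Suc n"] by simp
  qed
  moreover have "Delta_carry n s h = 0" using Delta_carry_other_head[of s n h] h b s by auto
  ultimately show ?thesis using h by (simp add: Mn_eq.refl)
qed

lemma normal_word_gen_action_single:
  assumes s: "1 \<le> s" "s < n"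
  shows "Mn_eq n (s # normal_word n [(True, s)])
    (normal_word n (gen_action n s [(True, s)]) @ rhon_pow n ((n + 1) * Delta_carry n s [(True, s)]))"
  using s by (simp add: gen_action_def factor_order_def Mn_eq.refl)

lemma normal_word_gen_action_pair:
  assumes s: "1 \<le> s" "s < n" and a: "0 < a" "a < n"
  defines "h \<equiv> [(True, s), (False, a)]"
  shows "Mn_eq n (s # normal_word n h)
    (normal_word n (gen_action n s h) @ rhon_pow n ((n + 1) * Delta_carry n s h))"
proof -
  define x where "x = (s + a) mod n"
  define c where "c = (s + a) div n"
  have sum: "s + c + a = x + (n + 1) * c"
    using s a div_mult_mod_eq[of "s + a" n] by (simp add: x_def c_def algebra_simps)
  have "Mn_eq n (s # normal_word n h) (sigma_pow n s @ a # rhon_pow n a)"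
    using letter_rhon_pow_eq_sigma_pow[of s n] s by (simp add: h_def)
  also have "Mn_eq n \<dots> ((if x = 0 then [] else [x]) @ rhon_pow n (s + c) @ rhon_pow n a)"
    unfolding x_def c_def by (rule sigma_pow_letter[OF s a])
  also have "(if x = 0 then [] else [x]) @ rhon_pow n (s + c) @ rhon_pow n a
      = normal_word n (gen_action n s h) @ rhon_pow n ((n + 1) * Delta_carry n s h)"
  proof -
    have "gen_action n s h = (if x = 0 then [] else [(False, x)])"
      using s by (simp add: h_def gen_action_def factor_order_def x_def)
    moreover have "Delta_carry n s h = c" using s by (simp add: h_def c_def)
    moreover have "rhon_pow n (s + c) @ rhon_pow n a = rhon_pow n x @ rhon_pow n ((n + 1) * c)"
      by (simp only: rhon_pow_add[symmetric] sum)
    ultimately show ?thesis by (cases "x = 0") (simp_all add: h_def)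
  qed
  finally show ?thesis .
qed

lemma normal_word_gen_action_long:
  assumes s: "1 \<le> s" "s < n" and h: "reduced n h" "h = (True, s) # (False, a) # (True, b) # r"
  shows "Mn_eq n (s # normal_word n h)
    (normal_word n (gen_action n s h) @ rhon_pow n ((n + 1) * Delta_carry n s h))"
proof -
  have a: "0 < a" "a < n" and b: "b < Suc n" and w: "set (normal_word n r) \<subseteq> {1..n}"
    using h set_normal_word[of n r] s by (auto simp: factor_order_def)
  define x where "x = (s + a) mod n"
  define c where "c = (s + a) div n"
  define e where "e = (a + b) mod Suc n"
  have "e \<le> n" by (simp add: e_def less_Suc_eq_le)
  have sum: "s + a = x + n * c"
    using div_mult_mod_eq[of "s + a" n] by (simp add: x_def c_def algebra_simps)
  have "c \<le> 1"
    using s a less_mult_imp_div_less[of "s + a" 2 n] by (simp add: c_def)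
  have "Mn_eq n (s # normal_word n h) (sigma_pow n s @ a # rhon_pow n e @ normal_word n r)"
    using letter_rhon_pow_eq_sigma_pow[of s n] s h by (simp add: e_def)
  also have "Mn_eq n \<dots> ((if x = 0 then [] else [x]) @ rhon_pow n (s + c + e) @ normal_word n r)"
    using sigma_pow_letter[OF s a, of "rhon_pow n e @ normal_word n r"]
    unfolding x_def c_def by (simp only: rhon_pow_add append_assoc)
  also have "Mn_eq n \<dots> ((if x = 0 then [] else [x]) @ rhon_pow n ((s + c + e) mod Suc n) @
      normal_word n r @ rhon_pow n ((n + 1) * (if n < s + c + e then 1 else 0)))"
    by (rule rhon_pow_reduce[OF w]) (use \<open>c \<le> 1\<close> \<open>e \<le> n\<close> s in simp)
  also have "\<dots> = normal_word n (gen_action n s h) @ rhon_pow n ((n + 1) * Delta_carry n s h)"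
  proof -
    have "(s + c + e) mod Suc n = (s + c + (a + b)) mod Suc n"
      by (simp add: e_def mod_add_right_eq)
    also have "s + c + (a + b) = (x + b) + Suc n * c" using sum by simp
    finally have mod: "(s + c + e) mod Suc n = (x + b) mod Suc n"
      by (simp only: mod_mult_self2)
    have "gen_action n s h = (if x = 0 then (True, b) # r else (False, x) # (True, b) # r)"
      using s h by (simp add: gen_action_def factor_order_def x_def)
    moreover have "Delta_carry n s h = (if n < s + c + e then 1 else 0)"
      using s h by (simp add: c_def e_def)
    ultimately show ?thesis using mod b by (cases "x = 0") simp_all
  qed
  finally show ?thesis .
qed

lemma reduced_shapes:
  assumes "reduced n h"
  obtains "h = [] \<or> (\<exists>a r. h = (False, a) # r)"
    | b r where "h = (True, b) # r" "b \<noteq> s"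
    | "h = [(True, s)]"
    | a where "h = [(True, s), (False, a)]"
    | a b r where "h = (True, s) # (False, a) # (True, b) # r"
proof (cases h)
  case (Cons p r)
  obtain k b where p: "p = (k, b)" by (cases p)
  show thesis
  proof (cases "k \<and> b = s")
    case True
    show thesis
    proof (cases r)
      case (Cons q r')
      then show thesis
        using assms that True \<open>h = p # r\<close> p
        by (cases q; cases r'; cases "hd r'") auto
    qed (use that True \<open>h = p # r\<close> p in auto)
  qed (use that Cons p in \<open>cases k; auto\<close>)
qed (use that in auto)

lemma normal_word_gen_action:
  assumes n: "1 \<le> n" and s: "1 \<le> s" "s \<le> n" and h: "reduced n h"
  shows "Mn_eq n (s # normal_word n h)
    (normal_word n (gen_action n s h) @ rhon_pow n ((n + 1) * Delta_carry n s h))"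
proof (cases "s = n")
  case True
  then show ?thesis using normal_word_gen_action_rhon[OF n h] by simp
next
  case False
  then have s': "1 \<le> s" "s < n" using s by auto
  from h show ?thesis
  proof (cases rule: reduced_shapes[where s = s])
    case (4 a)
    then show ?thesis using normal_word_gen_action_pair[OF s', of a] h by (simp add: factor_order_def)
  qed (use s' h normal_word_gen_action_no_head normal_word_gen_action_other_head
      normal_word_gen_action_single normal_word_gen_action_long in auto)
qed

lemma word_normal_form:
  assumes n: "1 \<le> n" and u: "set u \<subseteq> {1..n}"
  shows "\<exists>T. Mn_eq n u (normal_word n (group_image n u) @ rhon_pow n ((n + 1) * T))"
  using u
proof (induction u)
  case Nil
  show ?case by (auto simp: group_image_def intro!: exI[of _ 0] Mn_eq.refl)
next
  case (Cons s u)
  then obtain T where T: "Mn_eq n u (normal_word n (group_image n u) @ rhon_pow n ((n + 1) * T))"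
    by auto
  have s: "1 \<le> s" "s \<le> n" using Cons.prems by auto
  let ?h = "group_image n u"
  have "Mn_eq n (s # u) (s # normal_word n ?h @ rhon_pow n ((n + 1) * T))"
    using Mn_eq_Cons[OF T] by simp
  also have "Mn_eq n \<dots> ((normal_word n (gen_action n s ?h) @ rhon_pow n ((n + 1) * Delta_carry n s ?h))
      @ rhon_pow n ((n + 1) * T))"
    using Mn_eq_append_right[OF normal_word_gen_action[OF n s reduced_group_image[OF n]]] by simp
  also have "\<dots> = normal_word n (group_image n (s # u)) @
      rhon_pow n ((n + 1) * (Delta_carry n s ?h + T))"
    by (simp only: group_image_Cons append_assoc rhon_pow_add[symmetric] distrib_left)
  finally show ?case by blast
qed

lemma Mn_eq_iff_group_image:
  assumes n: "1 \<le> n" and u: "set u \<subseteq> {1..n}" and v: "set v \<subseteq> {1..n}"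
  shows "Mn_eq n u v \<longleftrightarrow> group_image n u = group_image n v \<and> sum_list u = sum_list v"
proof
  assume "group_image n u = group_image n v \<and> sum_list u = sum_list v"
  then have P: "group_image n u = group_image n v" and S: "sum_list u = sum_list v" by auto
  obtain T1 where T1: "Mn_eq n u (normal_word n (group_image n u) @ rhon_pow n ((n + 1) * T1))"
    using word_normal_form[OF n u] by auto
  obtain T2 where T2: "Mn_eq n v (normal_word n (group_image n v) @ rhon_pow n ((n + 1) * T2))"
    using word_normal_form[OF n v] by auto
  have "sum_list u = sum_list (normal_word n (group_image n u)) + n * ((n + 1) * T1)"
    "sum_list v = sum_list (normal_word n (group_image n u)) + n * ((n + 1) * T2)"
    using Mn_eq_sum_list[OF T1] Mn_eq_sum_list[OF T2] P by (simp_all add: sum_list_rhon_pow)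
  then have "n * ((n + 1) * T1) = n * ((n + 1) * T2)" using S by linarith
  then have "T1 = T2"
    using n by (metis mult.assoc mult_cancel_left mult_is_0 not_one_le_zero Suc_eq_plus1 nat.distinct(1))
  then show "Mn_eq n u v" using T1 T2 P by (metis Mn_eq.sym Mn_eq.trans)
qed (simp add: group_image_Mn_eq Mn_eq_sum_list)

lemma Mn_left_cancel:
  assumes n: "1 \<le> n" and b: "set b \<subseteq> {1..n}" and c: "set c \<subseteq> {1..n}"
    and e: "Mn_eq n (a @ b) (a @ c)"
  shows "Mn_eq n b c"
proof -
  have "foldr (gen_action n) a (group_image n b) = foldr (gen_action n) a (group_image n c)"
    using group_image_Mn_eq[OF e] by (simp add: group_image_append)
  then have "group_image n b = group_image n c"
    using foldr_gen_action_inj[OF n reduced_group_image[OF n] reduced_group_image[OF n]] by blast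
  moreover have "sum_list b = sum_list c" using Mn_eq_sum_list[OF e] by simp
  ultimately show ?thesis using Mn_eq_iff_group_image[OF n b c] by simp
qed

section \<open>Common right-multiples of two generators\<close>

lemma lmult_small_head:
  assumes st: "1 \<le> s" "s < t" "t \<le> n" and g: "reduced n g"
    and nb: "\<not> (\<exists>B r. g = (True, B) # r \<and> s \<le> B)"
  shows "\<exists>B r. B < s \<and> lmult n True (Suc n - t) g = (True, Suc n - t + B) # r"
proof (cases g)
  case Nil
  then show ?thesis using st by (auto simp: factor_order_def intro!: exI[of _ 0])
next
  case (Cons p r)
  obtain k b where p: "p = (k, b)" by (cases p)
  show ?thesis
  proof (cases k)
    case False
    then show ?thesis using st Cons p by (auto simp: factor_order_def intro!: exI[of _ 0])
  next
    case True
    then have "b < s" using nb Cons p by auto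
    then show ?thesis using True Cons p st by (auto simp: factor_order_def add.commute)
  qed
qed

lemma gen_action_small_head:
  assumes n: "1 \<le> n" and st: "1 \<le> s" "s < t" "t \<le> n" and g: "reduced n g"
    and small: "\<not> (\<exists>B r. g = (True, B) # r \<and> s \<le> B)"
  obtains G where "reduced n G" "gen_action n t g = gen_action n s G"
    "Delta_carry n s G = 1" "Delta_carry n t g = 0"
proof -
  obtain B r where B: "B < s" "lmult n True (Suc n - t) g = (True, Suc n - t + B) # r"
    using lmult_small_head[OF st g small] by blast
  define G where "G = (True, s) # (False, t - s) # lmult n True (Suc n - t) g"
  have "reduced n G"
    using reduced_lmult[OF n g, of True "Suc n - t"] st B by (simp add: G_def factor_order_def)
  moreover have "gen_action n t g = gen_action n s G"
    using st B by (auto simp: gen_action_def G_def factor_order_def)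
  moreover have "Delta_carry n s G = 1"
  proof -
    have "(t - s + (Suc n - t + B)) mod Suc n = Suc n - s + B" using st B by simp
    then show ?thesis using st B by (simp add: G_def)
  qed
  moreover have "Delta_carry n t g = 0"
  proof -
    have "\<not> (\<exists>r. g = (True, t) # r)" using small st(2) less_imp_le by blast
    then show ?thesis using Delta_carry_rhon[of n g] Delta_carry_other_head[of t n g]
      by (cases "t = n") auto
  qed
  ultimately show thesis by (rule that)
qed

text \<open>Otherwise the normal form of \<open>s e\<^sub>1\<close> splits off at least one more factor \<open>\<Delta>\<close> than
  that of \<open>t e\<^sub>2\<close>, although both have the same image, so their weights would differ.\<close>

lemma group_image_large_head:
  assumes n: "1 \<le> n" and st: "1 \<le> s" "s < t" "t \<le> n"
    and e1: "set e1 \<subseteq> {1..n}" and e2: "set e2 \<subseteq> {1..n}"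
    and eq: "Mn_eq n (s # e1) (t # e2)"
    and normal: "Mn_eq n e2 (normal_word n (group_image n e2))"
  shows "\<exists>B r. group_image n e2 = (True, B) # r \<and> s \<le> B"
proof (rule ccontr)
  define g where "g = group_image n e2"
  define g1 where "g1 = group_image n e1"
  have g: "reduced n g" "reduced n g1"
    using reduced_group_image[OF n] by (simp_all add: g_def g1_def)
  assume "\<not> (\<exists>B r. group_image n e2 = (True, B) # r \<and> s \<le> B)"
  then obtain G where G: "reduced n G" "gen_action n t g = gen_action n s G"
    "Delta_carry n s G = 1" "Delta_carry n t g = 0"
    using gen_action_small_head[OF n st g(1)] by (auto simp: g_def)
  have step: "gen_action n s g1 = gen_action n t g"
    using group_image_Mn_eq[OF eq] by (simp add: group_image_Cons g_def g1_def)
  then have "g1 = G" using gen_action_inj[OF n g(2) G(1)] G(2) by simp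
  obtain T where T: "Mn_eq n e1 (normal_word n g1 @ rhon_pow n ((n + 1) * T))"
    using word_normal_form[OF n e1] by (auto simp: g1_def)
  have "s + sum_list (normal_word n g1)
      = sum_list (normal_word n (gen_action n s g1)) + n * ((n + 1) * Delta_carry n s g1)"
    using Mn_eq_sum_list[OF normal_word_gen_action[OF n _ _ g(2), of s]] st
    by (simp add: sum_list_rhon_pow)
  moreover have "t + sum_list (normal_word n g)
      = sum_list (normal_word n (gen_action n t g)) + n * ((n + 1) * Delta_carry n t g)"
    using Mn_eq_sum_list[OF normal_word_gen_action[OF n _ _ g(1), of t]] st
    by (simp add: sum_list_rhon_pow)
  ultimately have "n * ((n + 1) * (1 + T)) = 0"
    using Mn_eq_sum_list[OF eq] Mn_eq_sum_list[OF T] Mn_eq_sum_list[OF normal] step \<open>g1 = G\<close> G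
    by (simp add: sum_list_rhon_pow g_def distrib_left)
  then show False using n by simp
qed

lemma rhon_pow_prefix_of_cofactor:
  assumes n: "1 \<le> n" and st: "1 \<le> s" "s < t" "t \<le> n"
    and e1: "set e1 \<subseteq> {1..n}" and e2: "set e2 \<subseteq> {1..n}"
    and eq: "Mn_eq n (s # e1) (t # e2)"
  shows "\<exists>f. set f \<subseteq> {1..n} \<and> Mn_eq n e2 (rhon_pow n s @ f)"
proof -
  define g where "g = group_image n e2"
  have w: "set (normal_word n g) \<subseteq> {1..n}"
    using set_normal_word[OF n reduced_group_image[OF n]] by (simp add: g_def)
  obtain T where T: "Mn_eq n e2 (normal_word n g @ rhon_pow n ((n + 1) * T))"
    using word_normal_form[OF n e2] by (auto simp: g_def)
  show ?thesis
  proof (cases T)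
    case (Suc T')
    have "Mn_eq n e2 ((normal_word n g @ rhon_pow n (n + 1)) @ rhon_pow n ((n + 1) * T'))"
      using T Suc rhon_pow_add[of n "n + 1" "(n + 1) * T'"] by simp
    also have "Mn_eq n \<dots> ((rhon_pow n (n + 1) @ normal_word n g) @ rhon_pow n ((n + 1) * T'))"
      by (rule Mn_eq_append_right, rule Mn_eq.sym, rule Delta_commute[OF w])
    also have "\<dots> = rhon_pow n s @ rhon_pow n (n + 1 - s) @ normal_word n g @ rhon_pow n ((n + 1) * T')"
      using st rhon_pow_add[of n s "n + 1 - s"] by simp
    finally show ?thesis using w set_rhon_pow[OF n] by (intro exI conjI) auto
  next
    case 0
    then have normal: "Mn_eq n e2 (normal_word n g)" using T by simp
    then obtain B r where "g = (True, B) # r" "s \<le> B"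
      using group_image_large_head[OF n st e1 e2 eq] by (auto simp: g_def)
    moreover have "set (normal_word n r) \<subseteq> {1..n}"
      using set_normal_word[OF n, of r] reduced_group_image[OF n, of e2] \<open>g = (True, B) # r\<close>
      by (simp add: g_def)
    ultimately show ?thesis
      using normal rhon_pow_add[of n s "B - s"] set_rhon_pow[OF n]
      by (intro exI[of _ "rhon_pow n (B - s) @ normal_word n r"]) auto
  qed
qed

section \<open>Right multiples and right-lcms\<close>

lemma Mn_words_iff: "x \<in> Mn_words n \<longleftrightarrow> set x \<subseteq> {1..n}"
  by (auto simp: Mn_words_def)

lemma Mn_words_simps [simp]:
  "[] \<in> Mn_words n"
  "s # y \<in> Mn_words n \<longleftrightarrow> s \<in> {1..n} \<and> y \<in> Mn_words n"
  "x @ y \<in> Mn_words n \<longleftrightarrow> x \<in> Mn_words n \<and> y \<in> Mn_words n"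
  by (auto simp: Mn_words_def)

lemma rhon_pow_in_Mn_words [simp]: "1 \<le> n \<Longrightarrow> rhon_pow n k \<in> Mn_words n"
  by (auto simp: Mn_words_def rhon_pow_def)

lemma Mn_right_multipleE:
  assumes "Mn_right_multiple n d a"
  obtains x where "x \<in> Mn_words n" "Mn_eq n d (a @ x)"
  using assms unfolding Mn_right_multiple_def by blast

lemma Mn_right_multipleI: "x \<in> Mn_words n \<Longrightarrow> Mn_eq n d (a @ x) \<Longrightarrow> Mn_right_multiple n d a"
  unfolding Mn_right_multiple_def by blast

lemma Mn_right_multiple_refl: "Mn_right_multiple n a a"
  using Mn_right_multipleI[of "[]" n a a] by (simp add: Mn_eq.refl)

lemma Mn_right_multiple_append: "x \<in> Mn_words n \<Longrightarrow> Mn_right_multiple n (a @ x) a"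
  by (rule Mn_right_multipleI) (auto intro: Mn_eq.refl)

lemma Mn_right_multiple_Nil: "b \<in> Mn_words n \<Longrightarrow> Mn_right_multiple n b []"
  using Mn_right_multiple_append[of b n "[]"] by simp

lemma Mn_right_multiple_trans:
  assumes "Mn_right_multiple n d a" "Mn_right_multiple n a b"
  shows "Mn_right_multiple n d b"
proof -
  obtain x y where x: "x \<in> Mn_words n" "Mn_eq n d (a @ x)"
    and y: "y \<in> Mn_words n" "Mn_eq n a (b @ y)"
    using assms by (blast elim: Mn_right_multipleE)
  have "Mn_eq n d (b @ y @ x)"
    using Mn_eq.trans[OF x(2) Mn_eq_append_right[OF y(2)]] by simp
  then show ?thesis using x y by (intro Mn_right_multipleI) auto
qed

lemma Mn_right_multiple_cong_left:
  assumes "Mn_eq n d d'" "Mn_right_multiple n d' a"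
  shows "Mn_right_multiple n d a"
proof -
  obtain x where "x \<in> Mn_words n" "Mn_eq n d' (a @ x)"
    using assms(2) by (rule Mn_right_multipleE)
  with Mn_eq.trans[OF assms(1)] show ?thesis by (blast intro: Mn_right_multipleI)
qed

lemma Mn_right_multiple_cong_right:
  assumes "Mn_eq n a a'" "Mn_right_multiple n d a"
  shows "Mn_right_multiple n d a'"
proof -
  obtain x where "x \<in> Mn_words n" "Mn_eq n d (a @ x)"
    using assms(2) by (rule Mn_right_multipleE)
  with Mn_eq.trans[OF _ Mn_eq_append_right[OF assms(1)]] show ?thesis
    by (blast intro: Mn_right_multipleI)
qed

lemma Mn_right_multiple_Cons: "Mn_right_multiple n d a \<Longrightarrow> Mn_right_multiple n (s # d) (s # a)"
  by (auto elim!: Mn_right_multipleE intro!: Mn_right_multipleI dest: Mn_eq_Cons)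

lemma Mn_right_multiple_ConsD:
  "Mn_right_multiple n d (s # a) \<Longrightarrow> a \<in> Mn_words n \<Longrightarrow> Mn_right_multiple n d [s]"
  using Mn_right_multiple_trans Mn_right_multiple_append[of a n "[s]"] by simp

lemma Mn_right_multiple_Cons_cancel:
  assumes n: "1 \<le> n" and d: "d \<in> Mn_words n" and a: "a \<in> Mn_words n"
    and "Mn_right_multiple n (s # d) (s # a)"
  shows "Mn_right_multiple n d a"
proof -
  obtain x where x: "x \<in> Mn_words n" "Mn_eq n ([s] @ d) ([s] @ a @ x)"
    using assms(4) by (auto elim: Mn_right_multipleE)
  have "Mn_eq n d (a @ x)"
    using Mn_left_cancel[OF n _ _ x(2)] d a x(1) by (simp add: Mn_words_iff)
  with x(1) show ?thesis by (rule Mn_right_multipleI)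
qed

lemma Mn_right_lcmI:
  assumes "L \<in> Mn_words n" "Mn_right_multiple n L a" "Mn_right_multiple n L b"
    "\<And>d. d \<in> Mn_words n \<Longrightarrow> Mn_right_multiple n d a \<Longrightarrow> Mn_right_multiple n d b \<Longrightarrow>
      Mn_right_multiple n d L"
  shows "Mn_right_lcm n L a b"
  using assms unfolding Mn_right_lcm_def Mn_common_right_multiple_def by auto

lemma Mn_right_lcmD:
  assumes "Mn_right_lcm n L a b"
  shows "L \<in> Mn_words n" "Mn_right_multiple n L a" "Mn_right_multiple n L b"
    "\<And>d. d \<in> Mn_words n \<Longrightarrow> Mn_right_multiple n d a \<Longrightarrow> Mn_right_multiple n d b \<Longrightarrow>
      Mn_right_multiple n d L"
  using assms unfolding Mn_right_lcm_def Mn_common_right_multiple_def by auto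

lemma Mn_right_lcm_Nil: "b \<in> Mn_words n \<Longrightarrow> Mn_right_lcm n b [] b"
  by (rule Mn_right_lcmI) (auto intro: Mn_right_multiple_refl Mn_right_multiple_Nil)

lemma Mn_right_lcm_commute: "Mn_right_lcm n L a b \<Longrightarrow> Mn_right_lcm n L b a"
  unfolding Mn_right_lcm_def Mn_common_right_multiple_def by blast

lemma Mn_right_lcm_cong:
  assumes "Mn_eq n a a'" "Mn_eq n b b'" "Mn_right_lcm n L a b"
  shows "Mn_right_lcm n L a' b'"
  using Mn_right_lcmD[OF assms(3)] assms(1,2)
  by (intro Mn_right_lcmI) (blast intro: Mn_right_multiple_cong_right Mn_eq.sym)+

lemma common_right_multiple_ConsE:
  assumes n: "1 \<le> n" and x: "x \<in> Mn_words n" and y: "y \<in> Mn_words n"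
    and dx: "Mn_right_multiple n d (s # x)" and dy: "Mn_right_multiple n d (s # y)"
  obtains f where "f \<in> Mn_words n" "Mn_eq n d (s # x @ f)" "Mn_right_multiple n (x @ f) y"
proof -
  obtain f where f: "f \<in> Mn_words n" "Mn_eq n d (s # x @ f)"
    using dx by (auto elim: Mn_right_multipleE)
  have "Mn_right_multiple n (s # x @ f) (s # y)"
    using dy f(2) Mn_right_multiple_cong_left Mn_eq.sym by blast
  then have "Mn_right_multiple n (x @ f) y"
    using Mn_right_multiple_Cons_cancel[OF n] x y f(1) by simp
  with f that show thesis by blast
qed

lemma Mn_right_lcm_Cons:
  assumes n: "1 \<le> n" and s: "s \<in> {1..n}" and x: "x \<in> Mn_words n" and y: "y \<in> Mn_words n"
    and L: "Mn_right_lcm n L x y"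
  shows "Mn_right_lcm n (s # L) (s # x) (s # y)"
proof (rule Mn_right_lcmI)
  note L = Mn_right_lcmD[OF L]
  show "s # L \<in> Mn_words n" using s L(1) by simp
  show "Mn_right_multiple n (s # L) (s # x)" "Mn_right_multiple n (s # L) (s # y)"
    using L(2,3) by (simp_all add: Mn_right_multiple_Cons)
  fix d
  assume d: "d \<in> Mn_words n" "Mn_right_multiple n d (s # x)" "Mn_right_multiple n d (s # y)"
  then obtain f where f: "f \<in> Mn_words n" "Mn_eq n d (s # x @ f)" "Mn_right_multiple n (x @ f) y"
    using common_right_multiple_ConsE[OF n x y] by blast
  then have "Mn_right_multiple n (x @ f) L"
    using L(4) x Mn_right_multiple_append by simp
  then show "Mn_right_multiple n d (s # L)"
    using Mn_right_multiple_cong_left[OF f(2)] Mn_right_multiple_Cons by blast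
qed

lemma Mn_right_lcm_absorb:
  assumes L1: "Mn_right_multiple n L1 b"
    and below: "\<And>d. d \<in> Mn_words n \<Longrightarrow> Mn_right_multiple n d a \<Longrightarrow> Mn_right_multiple n d b \<Longrightarrow>
      Mn_right_multiple n d L1"
    and L: "Mn_right_lcm n L a L1"
  shows "Mn_right_lcm n L a b"
  using Mn_right_lcmD[OF L] L1 below by (intro Mn_right_lcmI) (blast intro: Mn_right_multiple_trans)+

lemma common_right_multiple_cofactor:
  assumes n: "1 \<le> n" and s: "s \<in> {1..n}" and x: "x \<in> Mn_words n" and y: "y \<in> Mn_words n"
    and cx: "Mn_right_multiple n c (s # x)" and cy: "Mn_right_multiple n c (s # y)"
  shows "\<exists>c'. c' \<in> Mn_words n \<and> Mn_right_multiple n c' x \<and> Mn_right_multiple n c' y \<and>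
    sum_list c' < sum_list c"
proof -
  obtain f where f: "f \<in> Mn_words n" "Mn_eq n c (s # x @ f)" "Mn_right_multiple n (x @ f) y"
    using common_right_multiple_ConsE[OF n x y cx cy] .
  moreover have "sum_list (x @ f) < sum_list c" using Mn_eq_sum_list[OF f(2)] s by simp
  ultimately show ?thesis
    using x Mn_right_multiple_append[OF f(1), of x] by (intro exI[of _ "x @ f"]) simp
qed

lemma Mn_right_lcm_eq:
  assumes "Mn_eq n L L'" "L' \<in> Mn_words n" "Mn_right_lcm n L a b"
  shows "Mn_right_lcm n L' a b"
  using Mn_right_lcmD[OF assms(3)] assms(1,2)
  by (intro Mn_right_lcmI)
     (blast intro: Mn_right_multiple_cong_left Mn_right_multiple_cong_right Mn_eq.sym)+

lemma generators_common_multiple: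
  assumes "1 \<le> s" "s < t" "t \<le> n"
  shows "Mn_eq n (s # rhon_pow n s @ [t - s]) (t # rhon_pow n s)"
proof -
  have "Mn_eq n (s # rhon_pow n s @ [t - s]) (sigma_pow n s @ [t - s])"
    using letter_rhon_pow_eq_sigma_pow[of s n] assms by simp
  also have "Mn_eq n \<dots> (t # rhon_pow n s)"
    using sigma_pow_shift[of "t - s" s n "[]"] assms by simp
  finally show ?thesis .
qed

lemma Mn_right_lcm_generators_less:
  assumes n: "1 \<le> n" and st: "1 \<le> s" "s < t" "t \<le> n"
  shows "Mn_right_lcm n (t # rhon_pow n s) [s] [t]"
proof (rule Mn_right_lcmI)
  note eq = generators_common_multiple[OF st]
  show "t # rhon_pow n s \<in> Mn_words n" using n st by simp
  show "Mn_right_multiple n (t # rhon_pow n s) [t]"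
    using Mn_right_multiple_append[of "rhon_pow n s" n "[t]"] n by simp
  have "Mn_right_multiple n ([s] @ rhon_pow n s @ [t - s]) [s]"
    by (rule Mn_right_multiple_append) (use n st in auto)
  then show "Mn_right_multiple n (t # rhon_pow n s) [s]"
    using Mn_right_multiple_cong_left[OF Mn_eq.sym[OF eq]] by simp
  fix d
  assume d: "d \<in> Mn_words n" "Mn_right_multiple n d [s]" "Mn_right_multiple n d [t]"
  obtain e1 e2 where e1: "e1 \<in> Mn_words n" "Mn_eq n d (s # e1)"
    and e2: "e2 \<in> Mn_words n" "Mn_eq n d (t # e2)"
    using d(2,3) by (auto elim!: Mn_right_multipleE)
  have "Mn_eq n (s # e1) (t # e2)" using e1(2) e2(2) by (blast intro: Mn_eq.trans Mn_eq.sym)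
  then obtain f where f: "set f \<subseteq> {1..n}" "Mn_eq n e2 (rhon_pow n s @ f)"
    using rhon_pow_prefix_of_cofactor[OF n st, of e1 e2] e1(1) e2(1)
    unfolding Mn_words_iff by blast
  have "Mn_eq n d ((t # rhon_pow n s) @ f)"
    using Mn_eq.trans[OF e2(2) Mn_eq_Cons[OF f(2)]] by simp
  then show "Mn_right_multiple n d (t # rhon_pow n s)"
    using f(1) by (intro Mn_right_multipleI) (auto simp: Mn_words_iff)
qed


lemma Mn_right_lcm_generators:
  assumes n: "1 \<le> n" and s: "s \<in> {1..n}" and t: "t \<in> {1..n}"
  obtains u v where "u \<in> Mn_words n" "v \<in> Mn_words n" "Mn_eq n (s # u) (t # v)"
    "Mn_right_lcm n (s # u) [s] [t]"
proof (cases s t rule: linorder_cases)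
  case less
  then have st: "1 \<le> s" "s < t" "t \<le> n" and ts: "t - s \<in> {1..n}" using s t by auto
  then have "Mn_right_lcm n (s # rhon_pow n s @ [t - s]) [s] [t]"
    using Mn_right_lcm_eq[OF Mn_eq.sym[OF generators_common_multiple[OF st]]]
      Mn_right_lcm_generators_less[OF n st] n by simp
  then show thesis
    using that[of "rhon_pow n s @ [t - s]" "rhon_pow n s"] generators_common_multiple[OF st] n ts
    by simp
next
  case greater
  then have ts: "1 \<le> t" "t < s" "s \<le> n" and st: "s - t \<in> {1..n}" using s t by auto
  have "Mn_right_lcm n (s # rhon_pow n t) [s] [t]"
    using Mn_right_lcm_commute[OF Mn_right_lcm_generators_less[OF n ts]] .
  then show thesis
    using that[of "rhon_pow n t" "rhon_pow n t @ [s - t]"]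
      Mn_eq.sym[OF generators_common_multiple[OF ts]] n st by simp
next
  case equal
  then show thesis
    using that[of "[]" "[]"] Mn_right_lcm_Nil[of "[s]" n] Mn_eq.refl s
    by (simp add: Mn_right_lcm_def Mn_common_right_multiple_def)
qed

lemma Mn_right_lcm_Cons_Cons:
  assumes n: "1 \<le> n" and s: "s \<in> {1..n}" "a \<in> Mn_words n" and t: "t \<in> {1..n}" "b \<in> Mn_words n"
    and c: "c \<in> Mn_words n" "Mn_right_multiple n c (s # a)" "Mn_right_multiple n c (t # b)"
    and lcm_Cons: "\<And>r x y. r \<in> {1..n} \<Longrightarrow> x \<in> Mn_words n \<Longrightarrow> y \<in> Mn_words n \<Longrightarrow>
      Mn_right_multiple n c (r # x) \<Longrightarrow> Mn_right_multiple n c (r # y) \<Longrightarrow>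
      \<exists>L. Mn_right_lcm n L (r # x) (r # y)"
  shows "\<exists>L. Mn_right_lcm n L (s # a) (t # b)"
proof -
  obtain u v where uv: "u \<in> Mn_words n" "v \<in> Mn_words n" "Mn_eq n (s # u) (t # v)"
    and gen: "Mn_right_lcm n (s # u) [s] [t]"
    using Mn_right_lcm_generators[OF n s(1) t(1)] .
  have below_gen: "Mn_right_multiple n d (s # u)"
    if "d \<in> Mn_words n" "Mn_right_multiple n d (s # a)" "Mn_right_multiple n d (t # b)" for d
    using Mn_right_lcmD(4)[OF gen] that Mn_right_multiple_ConsD s t by blast
  have "Mn_right_multiple n c (t # v)"
    using below_gen[OF c] Mn_right_multiple_cong_right[OF uv(3)] by blast
  then obtain L1 where "Mn_right_lcm n L1 (t # v) (t # b)"
    using lcm_Cons[OF t(1) uv(2) t(2)] c(3) by blast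
  then have L1: "Mn_right_lcm n L1 (s # u) (t # b)"
    using Mn_right_lcm_cong[OF Mn_eq.sym[OF uv(3)] Mn_eq.refl] by blast
  have below_L1: "Mn_right_multiple n d L1"
    if "d \<in> Mn_words n" "Mn_right_multiple n d (s # a)" "Mn_right_multiple n d (t # b)" for d
    using Mn_right_lcmD(4)[OF L1] below_gen that by blast
  obtain z where z: "z \<in> Mn_words n" "Mn_eq n L1 (s # u @ z)"
    using Mn_right_lcmD(2)[OF L1] by (auto elim: Mn_right_multipleE)
  have "Mn_right_multiple n c (s # u @ z)"
    using below_L1[OF c] Mn_right_multiple_cong_right[OF z(2)] by blast
  then obtain L2 where "Mn_right_lcm n L2 (s # a) (s # u @ z)"
    using lcm_Cons[OF s(1,2), of "u @ z"] uv(1) z(1) c(2) by auto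
  then have "Mn_right_lcm n L2 (s # a) L1"
    using Mn_right_lcm_cong[OF Mn_eq.refl Mn_eq.sym[OF z(2)]] by blast
  then show ?thesis
    using Mn_right_lcm_absorb[OF Mn_right_lcmD(3)[OF L1] below_L1] by blast
qed

lemma Mn_right_lcm_exists:
  assumes n: "1 \<le> n" and "a \<in> Mn_words n" "b \<in> Mn_words n" "c \<in> Mn_words n"
    and "Mn_right_multiple n c a" "Mn_right_multiple n c b"
  shows "\<exists>L. Mn_right_lcm n L a b"
  using assms(2-)
proof (induction "sum_list c" arbitrary: a b c rule: less_induct)
  case less
  have lcm_Cons: "\<exists>L. Mn_right_lcm n L (r # x) (r # y)"
    if common: "r \<in> {1..n}" "x \<in> Mn_words n" "y \<in> Mn_words n"
      "Mn_right_multiple n c (r # x)" "Mn_right_multiple n c (r # y)" for r x y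
  proof -
    obtain c' where "c' \<in> Mn_words n" "Mn_right_multiple n c' x" "Mn_right_multiple n c' y"
      "sum_list c' < sum_list c"
      using common_right_multiple_cofactor[OF n common] by blast
    then obtain L where "Mn_right_lcm n L x y" using less.hyps common(2,3) by blast
    then show ?thesis using Mn_right_lcm_Cons[OF n common(1-3)] by blast
  qed
  show ?case
  proof (cases a)
    case Nil
    then show ?thesis using Mn_right_lcm_Nil[OF less.prems(2)] by blast
  next
    case (Cons s a')
    show ?thesis
    proof (cases b)
      case Nil
      then show ?thesis using Mn_right_lcm_commute[OF Mn_right_lcm_Nil[OF less.prems(1)]] by blast
    next
      case (Cons t b')
      then show ?thesis
        using Mn_right_lcm_Cons_Cons[OF n _ _ _ _ less.prems(3), of s a' t b'] lcm_Cons
          less.prems \<open>a = s # a'\<close> by auto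
    qed
  qed
qed

theorem proposition4p9:
  fixes n :: nat
  assumes "n \<ge> 1"
  shows "Mn_left_cancellative n \<and> Mn_conditional_right_lcms n"
proof
  show "Mn_left_cancellative n"
    unfolding Mn_left_cancellative_def
    by (intro ballI impI, rule Mn_left_cancel[OF assms]) (simp_all add: Mn_words_iff)
  show "Mn_conditional_right_lcms n"
    unfolding Mn_conditional_right_lcms_def Mn_common_right_multiple_def
    using Mn_right_lcm_exists[OF assms] by blast
qed

end
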